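(* Let $n\ge3$, let $\overrightarrow{C_n}$ be an oriented cycle and $D$ a distance set of $\overrightarrow{C_n}$ with $\min(D)\ge2$. If $\overrightarrow{C_n}$ is $D$-antimagic, then $\overrightarrow{C_n}$ is unidirectional.
   Context: An oriented graph is a simple graph each of whose edges is given one direction (an arc $(u,v)$ goes from $u$ to $v$). For vertices $u,v$, $d(u,v)$ is the length of a shortest directed path from $u$ to $v$ ($d(u,u)=0$, $\infty$ if no path). A distance set of an oriented graph is a nonempty set $D$ of nonnegative integers each of which is a finite distance $d(u,v)$ for some pair of vertices. $N_D(v)=\{y : d(v,y)\in D\}$; for a bijection $f:V\to\{1,\dots,|V|\}$, $\omega_D(v)=\sum_{x\in N_D(v)}f(x)$ (empty sum $0$); $f$ is $D$-antimagic if distinct vertices have distinct $D$-weights, and the graph is $D$-antimagic if such an $f$ exists. An oriented cycle $\overrightarrow{C_n}$ is an orientation of the cycle on $v_1,\dots,v_n$. It is unidirectional if (up to relabeling) its arcs are $(v_i,v_{i+1})$, $1\le i\le n-1$, and $(v_n,v_1)$. *)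

theory Defs
  imports Main
begin

text \<open>An oriented cycle on n vertices is modelled on the vertices 0..n-1 (v_1..v_n of the
 paper), with underlying cycle edges {i, (i+1) mod n}; the boolean orient i says whether
 the edge {i,(i+1) mod n} is oriented forwards (arc (i,(i+1) mod n)) or backwards.\<close>

definition cycle_arcs :: "nat \<Rightarrow> (nat \<Rightarrow> bool) \<Rightarrow> (nat \<times> nat) set" where
  "cycle_arcs n orient =
     {(i, Suc i mod n) | i. i < n \<and> orient i} \<union> {(Suc i mod n, i) | i. i < n \<and> \<not> orient i}"

definition dist_is :: "('a \<times> 'a) set \<Rightarrow> 'a \<Rightarrow> 'a \<Rightarrow> nat \<Rightarrow> bool" where
  "dist_is A u v k \<longleftrightarrow> (u, v) \<in> A ^^ k \<and> (\<forall>j<k. (u, v) \<notin> A ^^ j)"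

definition distance_set :: "'a set \<Rightarrow> ('a \<times> 'a) set \<Rightarrow> nat set \<Rightarrow> bool" where
  "distance_set V A D \<longleftrightarrow> D \<noteq> {} \<and> (\<forall>k\<in>D. \<exists>u\<in>V. \<exists>v\<in>V. dist_is A u v k)"

definition D_neighbourhood :: "'a set \<Rightarrow> ('a \<times> 'a) set \<Rightarrow> nat set \<Rightarrow> 'a \<Rightarrow> 'a set" where
  "D_neighbourhood V A D v = {y \<in> V. \<exists>k\<in>D. dist_is A v y k}"

definition D_weight :: "'a set \<Rightarrow> ('a \<times> 'a) set \<Rightarrow> nat set \<Rightarrow> ('a \<Rightarrow> nat) \<Rightarrow> 'a \<Rightarrow> nat" where
  "D_weight V A D f v = (\<Sum>x\<in>D_neighbourhood V A D v. f x)"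

definition D_antimagic_labeling :: "'a set \<Rightarrow> ('a \<times> 'a) set \<Rightarrow> nat set \<Rightarrow> ('a \<Rightarrow> nat) \<Rightarrow> bool" where
  "D_antimagic_labeling V A D f \<longleftrightarrow>
     bij_betw f V {1..card V} \<and> inj_on (D_weight V A D f) V"

definition D_antimagic :: "'a set \<Rightarrow> ('a \<times> 'a) set \<Rightarrow> nat set \<Rightarrow> bool" where
  "D_antimagic V A D \<longleftrightarrow> (\<exists>f. D_antimagic_labeling V A D f)"

definition unidirectional :: "nat \<Rightarrow> 'a set \<Rightarrow> ('a \<times> 'a) set \<Rightarrow> bool" where
  "unidirectional n V A \<longleftrightarrow>
     (\<exists>w. bij_betw w {0..<n} V \<and> A = {(w i, w (Suc i mod n)) | i. i < n})"

end

theory Submission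
  imports Defs
begin

text \<open>A vertex from which no directed walk of length 2 starts has no vertex at any distance
  \<open>k \<ge> 2\<close>, so its \<open>D\<close>-weight is the empty sum 0; an antimagic labeling allows at most one such
  vertex. On an oriented cycle whose edges do not all point the same way, look at a sink \<open>s\<close>: either it has a
  neighbour whose only out-arc points to \<open>s\<close>, or the cycle turns around a second time and has a
  second sink. Either way there are two vertices without a directed 2-walk.\<close>

lemma Domain_relpow_antimono:
  fixes A :: "('a \<times> 'a) set"
  assumes "m \<le> k"
  shows "Domain (A ^^ k) \<subseteq> Domain (A ^^ m)"
proof -
  have "A ^^ k = A ^^ m O A ^^ (k - m)"
    using assms by (metis le_add_diff_inverse relpow_add)
  then show ?thesis by blast
qed

lemma D_neighbourhood_eq_empty:
  assumes "v \<notin> Domain (A ^^ m)" and "\<forall>k\<in>D. m \<le> k"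
  shows "D_neighbourhood V A D v = {}"
proof -
  have "(v, y) \<notin> A ^^ k" if "k \<in> D" for y k
    using assms Domain_relpow_antimono[of m k A] that by blast
  then show ?thesis unfolding D_neighbourhood_def dist_is_def by blast
qed

lemma D_antimagic_empty_neighbourhood_unique:
  assumes "D_antimagic V A D" and "u \<in> V" "v \<in> V"
    and "D_neighbourhood V A D u = {}" "D_neighbourhood V A D v = {}"
  shows "u = v"
proof -
  obtain f where "inj_on (D_weight V A D f) V"
    using assms(1) unfolding D_antimagic_def D_antimagic_labeling_def by blast
  moreover have "D_weight V A D f u = D_weight V A D f v"
    using assms(4,5) by (simp add: D_weight_def)
  ultimately show ?thesis
    using assms(2,3) by (meson inj_onD)
qed

lemma cycle_arc_from:
  assumes "n \<ge> 1" and "(x mod n, y) \<in> cycle_arcs n orient"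
  shows "orient (x mod n) \<and> y = Suc x mod n \<or>
         \<not> orient ((x + (n - 1)) mod n) \<and> y = (x + (n - 1)) mod n"
proof -
  from assms(2) consider
    i where "orient i" "x mod n = i" "y = Suc i mod n"
  | i where "i < n" "\<not> orient i" "x mod n = Suc i mod n" "y = i"
    unfolding cycle_arcs_def by blast
  then show ?thesis
  proof cases
    case 1
    then show ?thesis by (metis mod_Suc_eq)
  next
    case 2
    have "(x + (n - 1)) mod n = (Suc i + (n - 1)) mod n"
      using 2(3) by (metis mod_add_left_eq)
    also have "\<dots> = i"
      using assms(1) 2(1) by simp
    finally show ?thesis using 2 by simp
  qed
qed

text \<open>\<open>Q i\<close> says that the cycle edge between \<open>i\<close> and \<open>i + 1\<close> points forwards; indices are read
  modulo the period \<open>n\<close>, so \<open>x + (n - 1)\<close> is the predecessor of \<open>x\<close>.\<close>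

definition cycle_2path_free :: "nat \<Rightarrow> (nat \<Rightarrow> bool) \<Rightarrow> nat \<Rightarrow> bool" where
  "cycle_2path_free n Q x \<longleftrightarrow>
     \<not> (Q x \<and> Q (Suc x)) \<and> \<not> (\<not> Q (x + (n - 1)) \<and> \<not> Q (x + (n - 1) + (n - 1)))"

lemma cycle_arcs_relpow2_Domain:
  assumes "n \<ge> 1" and "cycle_2path_free n (\<lambda>i. orient (i mod n)) x"
  shows "x mod n \<notin> Domain (cycle_arcs n orient ^^ 2)"
proof
  assume "x mod n \<in> Domain (cycle_arcs n orient ^^ 2)"
  then obtain y z where xy: "(x mod n, y) \<in> cycle_arcs n orient" and yz: "(y, z) \<in> cycle_arcs n orient"
    by (auto simp: numeral_2_eq_2)
  from cycle_arc_from[OF assms(1) xy] show False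
  proof
    assume fwd: "orient (x mod n) \<and> y = Suc x mod n"
    have "Suc x + (n - 1) = x + n" using assms(1) by simp
    with cycle_arc_from[OF assms(1) yz[unfolded fwd[THEN conjunct2]]] fwd assms(2)
    show False by (auto simp: cycle_2path_free_def)
  next
    assume bwd: "\<not> orient ((x + (n - 1)) mod n) \<and> y = (x + (n - 1)) mod n"
    from cycle_arc_from[OF assms(1) yz[unfolded bwd[THEN conjunct2]]] bwd assms(2)
    show False by (auto simp: cycle_2path_free_def)
  qed
qed

lemma mod_neq_of_less_add:
  fixes x y n :: nat
  assumes "x < y" "y < x + n"
  shows "x mod n \<noteq> y mod n"
proof
  assume "x mod n = y mod n"
  then have "n dvd y - x" using assms(1) by (metis less_imp_le mod_eq_dvd_iff_nat)
  moreover have "0 < y - x" "y - x < n" using assms by auto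
  ultimately show False using nat_dvd_not_less by blast
qed

lemma exists_step_down:
  fixes P :: "nat \<Rightarrow> bool"
  assumes "P a" "\<not> P c" "a \<le> c"
  shows "\<exists>j. a \<le> j \<and> j < c \<and> P j \<and> \<not> P (Suc j)"
  using assms
proof (induction c)
  case 0
  then show ?case by simp
next
  case (Suc c)
  show ?case
  proof (cases "P c")
    case True
    then show ?thesis using Suc.prems by (metis le_Suc_eq lessI)
  next
    case False
    then have "a \<le> c" using Suc.prems by (metis le_Suc_eq)
    with Suc.IH[OF Suc.prems(1) False] show ?thesis by (metis less_Suc_eq)
  qed
qed

lemma mod_exists_step_down:
  assumes "n \<ge> 1" "P (a mod n)" "\<not> P (b mod n)"
  shows "\<exists>i. P (i mod n) \<and> \<not> P (Suc i mod n)"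
proof -
  have "a \<le> b + a * n" using assms(1) by (metis le_add2 mult.commute mult_le_mono2 mult_1 order_trans)
  moreover have "\<not> P ((b + a * n) mod n)" using assms(3) by simp
  ultimately show ?thesis
    using exists_step_down[of "\<lambda>i. P (i mod n)"] assms(2) by blast
qed

lemma cycle_2path_free_sink:
  assumes "n \<ge> 1" "\<And>i. Q (i + n) = Q i" "Q j" "\<not> Q (Suc j)"
  shows "cycle_2path_free n Q (Suc j)"
proof -
  have "Suc j + (n - 1) = j + n" using assms(1) by simp
  then show ?thesis using assms by (simp add: cycle_2path_free_def)
qed

lemma two_cycle_2path_free:
  assumes n: "n \<ge> 3" and per: "\<And>i. Q (i + n) = Q i" and i: "Q i" "\<not> Q (Suc i)"
  shows "\<exists>x y. x mod n \<noteq> y mod n \<and> cycle_2path_free n Q x \<and> cycle_2path_free n Q y"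
proof -
  have sink: "cycle_2path_free n Q (Suc j)" if "Q j" "\<not> Q (Suc j)" for j
    using cycle_2path_free_sink[OF _ per that] n by simp
  consider (pred) "Q (i + (n - 1))" | (succ) "\<not> Q (Suc (Suc i))"
    | (between) "\<not> Q (i + (n - 1))" "Q (Suc (Suc i))" by blast
  then show ?thesis
  proof cases
    case pred
    then have "cycle_2path_free n Q i" using i by (simp add: cycle_2path_free_def)
    moreover have "i mod n \<noteq> Suc i mod n" using mod_neq_of_less_add[of i "Suc i" n] n by simp
    ultimately show ?thesis using sink[OF i] by blast
  next
    case succ
    have "Suc (Suc i) + (n - 1) = Suc i + n" "Suc (Suc i) + (n - 1) + (n - 1) = i + n + n"
      using n by simp_all
    then have "cycle_2path_free n Q (Suc (Suc i))"
      using succ i per by (simp add: cycle_2path_free_def)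
    moreover have "Suc i mod n \<noteq> Suc (Suc i) mod n"
      using mod_neq_of_less_add[of "Suc i" "Suc (Suc i)" n] n by simp
    ultimately show ?thesis using sink[OF i] by blast
  next
    case between
    have "Suc (Suc i) \<le> i + (n - 1)" using n by simp
    then obtain j where j: "Suc (Suc i) \<le> j" "j < i + (n - 1)" "Q j" "\<not> Q (Suc j)"
      using exists_step_down[of Q "Suc (Suc i)" "i + (n - 1)"] between by blast
    have "Suc i mod n \<noteq> Suc j mod n" using mod_neq_of_less_add[of "Suc i" "Suc j" n] j n by simp
    then show ?thesis using sink[OF i] sink[OF j(3,4)] by blast
  qed
qed

lemma unidirectional_cycle_arcs_forward:
  assumes "\<forall>i<n. orient i"
  shows "unidirectional n {0..<n} (cycle_arcs n orient)"
proof -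
  have "cycle_arcs n orient = {(id i, id (Suc i mod n)) | i. i < n}"
    using assms unfolding cycle_arcs_def by auto
  then show ?thesis unfolding unidirectional_def using bij_betw_id by blast
qed

lemma cycle_arcs_backward:
  assumes "\<forall>i<n. \<not> orient i"
  shows "cycle_arcs n orient = (cycle_arcs n (\<lambda>_. True))\<inverse>"
  using assms unfolding cycle_arcs_def by auto

lemma unidirectional_converse:
  assumes "unidirectional n V A"
  shows "unidirectional n V (A\<inverse>)"
proof -
  obtain w where w: "bij_betw w {0..<n} V" and A: "A = {(w i, w (Suc i mod n)) | i. i < n}"
    using assms unfolding unidirectional_def by blast
  define \<rho> where "\<rho> i = (n - i) mod n" for i
  have \<rho>_bij: "bij_betw \<rho> {0..<n} {0..<n}"
    by (rule bij_betw_byWitness[where f' = \<rho>]) (auto simp: \<rho>_def mod_if)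
  have \<rho>_Suc: "\<rho> (Suc i mod n) = n - 1 - i" and \<rho>_eq: "\<rho> i = Suc (n - 1 - i) mod n"
    if "i < n" for i
    using that by (auto simp: \<rho>_def mod_if)
  have "A\<inverse> = {(w (Suc i mod n), w i) | i. i < n}"
    using A by auto
  also have "\<dots> = {((w \<circ> \<rho>) j, (w \<circ> \<rho>) (Suc j mod n)) | j. j < n}"
  proof (intro set_eqI iffI)
    fix p assume "p \<in> {(w (Suc i mod n), w i) | i. i < n}"
    then obtain i where "i < n" "p = (w (Suc i mod n), w i)" by blast
    then show "p \<in> {((w \<circ> \<rho>) j, (w \<circ> \<rho>) (Suc j mod n)) | j. j < n}"
      using \<rho>_Suc[of "n - 1 - i"] \<rho>_eq[of "n - 1 - i"]
      by (auto intro!: exI[of _ "n - 1 - i"] simp: Suc_diff_Suc)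
  next
    fix p assume "p \<in> {((w \<circ> \<rho>) j, (w \<circ> \<rho>) (Suc j mod n)) | j. j < n}"
    then obtain j where "j < n" "p = ((w \<circ> \<rho>) j, (w \<circ> \<rho>) (Suc j mod n))" by blast
    then show "p \<in> {(w (Suc i mod n), w i) | i. i < n}"
      using \<rho>_Suc[of j] \<rho>_eq[of j] by auto
  qed
  finally show ?thesis
    unfolding unidirectional_def using bij_betw_trans[OF \<rho>_bij w] by blast
qed

lemma cycle_arcs_D_antimagic_imp_constant_orientation:
  assumes "n \<ge> 3" and "\<forall>k\<in>D. k \<ge> 2" and "D_antimagic {0..<n} (cycle_arcs n orient) D"
  shows "(\<forall>i<n. orient i) \<or> (\<forall>i<n. \<not> orient i)"
proof (rule ccontr)
  have n: "n \<ge> 1" using assms(1) by simp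
  assume "\<not> ?thesis"
  then obtain a b where "orient (a mod n)" "\<not> orient (b mod n)" by (metis mod_less)
  then obtain i where i: "orient (i mod n)" "\<not> orient (Suc i mod n)"
    using mod_exists_step_down[OF n] by blast
  have per: "orient ((k + n) mod n) = orient (k mod n)" for k by simp
  obtain x y where xy: "x mod n \<noteq> y mod n"
    and free: "cycle_2path_free n (\<lambda>i. orient (i mod n)) x" "cycle_2path_free n (\<lambda>i. orient (i mod n)) y"
    using two_cycle_2path_free[of n "\<lambda>i. orient (i mod n)", OF assms(1) per i] by blast
  have empty: "D_neighbourhood {0..<n} (cycle_arcs n orient) D (z mod n) = {}"
    if "cycle_2path_free n (\<lambda>i. orient (i mod n)) z" for z
    using D_neighbourhood_eq_empty[OF cycle_arcs_relpow2_Domain[OF n that]] assms(2) by blast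
  have "x mod n = y mod n"
    using D_antimagic_empty_neighbourhood_unique[OF assms(3) _ _ empty[OF free(1)] empty[OF free(2)]] n
    by simp
  with xy show False ..
qed

lemma unidirectional_cycle_arcs_constant:
  assumes "(\<forall>i<n. orient i) \<or> (\<forall>i<n. \<not> orient i)"
  shows "unidirectional n {0..<n} (cycle_arcs n orient)"
  using assms
proof
  assume "\<forall>i<n. \<not> orient i"
  then show ?thesis
    using unidirectional_converse[OF unidirectional_cycle_arcs_forward[of n "\<lambda>_. True"]]
    by (simp add: cycle_arcs_backward)
qed (rule unidirectional_cycle_arcs_forward)

theorem mainTheorem6:
  fixes n :: nat and orient :: "nat \<Rightarrow> bool" and D :: "nat set"
  assumes "n \<ge> 3"
    and "distance_set {0..<n} (cycle_arcs n orient) D"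
    and "\<forall>k\<in>D. k \<ge> 2"
    and "D_antimagic {0..<n} (cycle_arcs n orient) D"
  shows "unidirectional n {0..<n} (cycle_arcs n orient)"
  using cycle_arcs_D_antimagic_imp_constant_orientation[OF assms(1,3,4)]
  by (rule unidirectional_cycle_arcs_constant)

end
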